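(* Let $G=(V,E)$ be a graph, and let $\varepsilon>0$ satisfy $2\varepsilon|E|<1$. Construct the following instance of \textsc{HET-EF1}: the goods are the vertices $V$; there is an agent $0$ with $v_0(u)=1$ for every $u\in V$, and for each edge $e=(u_j,u_k)\in E$ an agent $e$ with $v_e(u_j)=v_e(u_k)=\varepsilon$ and $v_e(u)=0$ for $u\notin\{u_j,u_k\}$. Then for every integer $t\ge0$, the maximum independent set of $G$ has size $t$ if and only if the optimal value $\mathrm{OPT}$ of the constructed instance satisfies $t\le\mathrm{OPT}<t+1$.
   Context: \textsc{HET-EF1}: given agents with additive (possibly different) valuations $v_i:2^{[m]}\to\mathbb{R}_{\ge0}$ over a set of $m$ goods, maximize $\sum_i v_i(S_i)$ over all allocations (ordered partitions of the goods, parts may be empty) $(S_i)_i$ that are $\mathrm{EF1}$: for all agents $i,j$ with $S_j\ne\emptyset$ there is $g\in S_j$ with $v_i(S_i)\ge v_i(S_j)-v_i(g)$. Valuations are additive: $v_i(S)=\sum_{g\in S}v_i(g)$. *)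

theory Defs
  imports Complex_Main
begin

definition bval :: "('g \<Rightarrow> real) \<Rightarrow> 'g set \<Rightarrow> real" where
  "bval w S = (\<Sum>g\<in>S. w g)"

definition is_allocation :: "'a set \<Rightarrow> 'g set \<Rightarrow> ('a \<Rightarrow> 'g set) \<Rightarrow> bool" where
  "is_allocation N M A \<longleftrightarrow>
     (\<forall>i\<in>N. A i \<subseteq> M) \<and> (\<forall>i\<in>N. \<forall>j\<in>N. i \<noteq> j \<longrightarrow> A i \<inter> A j = {}) \<and>
     (\<Union>i\<in>N. A i) = M \<and> (\<forall>i. i \<notin> N \<longrightarrow> A i = {})"

definition is_EF1 :: "'a set \<Rightarrow> ('a \<Rightarrow> 'g \<Rightarrow> real) \<Rightarrow> ('a \<Rightarrow> 'g set) \<Rightarrow> bool" where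
  "is_EF1 N v A \<longleftrightarrow>
     (\<forall>i\<in>N. \<forall>j\<in>N. A j \<noteq> {} \<longrightarrow>
        (\<exists>g\<in>A j. bval (v i) (A i) \<ge> bval (v i) (A j) - v i g))"

definition welfare :: "'a set \<Rightarrow> ('a \<Rightarrow> 'g \<Rightarrow> real) \<Rightarrow> ('a \<Rightarrow> 'g set) \<Rightarrow> real" where
  "welfare N v A = (\<Sum>i\<in>N. bval (v i) (A i))"

definition het_ef1_opt :: "'a set \<Rightarrow> 'g set \<Rightarrow> ('a \<Rightarrow> 'g \<Rightarrow> real) \<Rightarrow> real" where
  "het_ef1_opt N M v =
     Max {welfare N v A | A. is_allocation N M A \<and> is_EF1 N v A}"

text \<open>Independent sets and the independence number of a graph (V,E),
  edges being 2-element subsets of V.\<close>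
definition indep_set :: "'v set \<Rightarrow> 'v set set \<Rightarrow> 'v set \<Rightarrow> bool" where
  "indep_set V E S \<longleftrightarrow> S \<subseteq> V \<and> (\<forall>e\<in>E. \<not> e \<subseteq> S)"

definition max_indep_size :: "'v set \<Rightarrow> 'v set set \<Rightarrow> nat" where
  "max_indep_size V E = Max {card S | S. indep_set V E S}"

text \<open>The reduction: agent None is agent 0, agent Some e is the edge agent e.\<close>
definition red_agents :: "'v set set \<Rightarrow> 'v set option set" where
  "red_agents E = insert None (Some ` E)"

definition red_val :: "real \<Rightarrow> 'v set option \<Rightarrow> 'v \<Rightarrow> real" where
  "red_val \<epsilon> i u = (case i of None \<Rightarrow> 1 | Some e \<Rightarrow> (if u \<in> e then \<epsilon> else 0))"

end

theory Submission
  imports Defs "HOL-Library.FuncSet"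
begin

text \<open>
  In an EF1 allocation the bundle of agent 0 is independent: if it contained an edge \<open>e\<close>, agent
  \<open>e\<close> would value it at \<open>2\<epsilon>\<close> and its own (disjoint) bundle at 0, and no single good is worth
  more than \<open>\<epsilon>\<close> to it. The edge agents together receive at most \<open>2\<epsilon>|E| < 1\<close>, so
  \<open>OPT < \<alpha> + 1\<close>. Conversely, give a maximum independent set \<open>S\<close> to agent 0 and every other
  vertex to the agent of some edge covering it (one exists by maximality of \<open>S\<close>). Edge agents
  never see their whole edge in another bundle, so one good removes their envy; agent 0 gets
  \<open>|S| \<ge> 1\<close> goods and every edge agent at most 2. Hence \<open>\<alpha> \<le> OPT\<close>.
\<close>

definition maximal_indep_set :: "'v set \<Rightarrow> 'v set set \<Rightarrow> 'v set \<Rightarrow> bool" where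
  "maximal_indep_set V E S \<longleftrightarrow>
     indep_set V E S \<and> (\<forall>u\<in>V - S. \<not> indep_set V E (insert u S))"

locale graph =
  fixes V :: "'v set" and E :: "'v set set"
  assumes finite_vertices: "finite V"
    and edges: "\<forall>e\<in>E. e \<subseteq> V \<and> card e = 2"
begin

lemma edge_subset: "e \<in> E \<Longrightarrow> e \<subseteq> V"
  and card_edge: "e \<in> E \<Longrightarrow> card e = 2"
  using edges by auto

lemma finite_edge: "e \<in> E \<Longrightarrow> finite e"
  using card_edge by (metis card.infinite zero_neq_numeral)

lemma finite_edges: "finite E"
  using finite_vertices edge_subset by (meson Pow_iff finite_Pow_iff finite_subset subsetI)

lemma indep_set_empty: "indep_set V E {}"
  using card_edge by (fastforce simp: indep_set_def)

lemma finite_indep_set_cards: "finite {card S | S. indep_set V E S}"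
proof -
  have "{card S | S. indep_set V E S} \<subseteq> card ` Pow V"
    by (auto simp: indep_set_def)
  then show ?thesis
    using finite_vertices finite_subset by blast
qed

lemma card_le_max_indep_size: "indep_set V E S \<Longrightarrow> card S \<le> max_indep_size V E"
  unfolding max_indep_size_def using finite_indep_set_cards by (auto intro: Max_ge)

lemma max_indep_size_attained: "\<exists>S. indep_set V E S \<and> card S = max_indep_size V E"
proof -
  have "{card S | S. indep_set V E S} \<noteq> {}"
    using indep_set_empty by blast
  then show ?thesis
    using Max_in[OF finite_indep_set_cards] unfolding max_indep_size_def by fastforce
qed

lemma maximal_indep_set_if_max_card:
  assumes "indep_set V E S" and "card S = max_indep_size V E"
  shows "maximal_indep_set V E S"
  unfolding maximal_indep_set_def
proof (intro conjI ballI notI)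
  fix u assume u: "u \<in> V - S" and "indep_set V E (insert u S)"
  then have "card (insert u S) \<le> card S"
    using assms(2) card_le_max_indep_size by simp
  moreover have "finite S"
    using assms(1) finite_vertices finite_subset by (auto simp: indep_set_def)
  ultimately show False
    using u by simp
qed (rule assms(1))

lemma maximal_indep_set_cover:
  assumes "maximal_indep_set V E S" and "u \<in> V - S"
  shows "\<exists>e\<in>E. u \<in> e \<and> e \<subseteq> insert u S"
proof -
  have "\<not> indep_set V E (insert u S)" and "indep_set V E S"
    using assms unfolding maximal_indep_set_def by auto
  then show ?thesis
    using assms(2) unfolding indep_set_def by blast
qed

lemma maximal_indep_set_nonempty:
  assumes "maximal_indep_set V E S" and "u \<in> V - S"
  shows "S \<noteq> {}"
proof
  assume "S = {}"
  then obtain e where "e \<in> E" "e \<subseteq> {u}"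
    using maximal_indep_set_cover[OF assms] by auto
  then show False
    using card_edge card_mono[of "{u}" e] by simp
qed

end

lemma finite_allocation_bundle:
  "finite M \<Longrightarrow> is_allocation N M A \<Longrightarrow> finite (A i)"
  by (cases "i \<in> N") (auto simp: is_allocation_def intro: finite_subset)

lemma finite_welfares:
  assumes "finite N" and "finite M"
  shows "finite {welfare N v A | A. is_allocation N M A \<and> P A}"
proof -
  have "{welfare N v A | A. is_allocation N M A \<and> P A} \<subseteq> welfare N v ` PiE N (\<lambda>_. Pow M)"
  proof clarify
    fix A assume "is_allocation N M A"
    then have "restrict A N \<in> PiE N (\<lambda>_. Pow M)"
      by (auto simp: is_allocation_def)
    moreover have "welfare N v (restrict A N) = welfare N v A"
      unfolding welfare_def by (rule sum.cong) auto
    ultimately show "welfare N v A \<in> welfare N v ` PiE N (\<lambda>_. Pow M)"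
      by (metis image_eqI)
  qed
  then show ?thesis
    using assms by (meson finite_PiE finite_Pow_iff finite_imageI finite_subset)
qed

lemma het_ef1_opt_bounds:
  assumes "finite N" and "finite M"
    and "is_allocation N M A" and "is_EF1 N v A" and "a \<le> welfare N v A"
    and "\<And>B. is_allocation N M B \<Longrightarrow> is_EF1 N v B \<Longrightarrow> welfare N v B < b"
  shows "a \<le> het_ef1_opt N M v \<and> het_ef1_opt N M v < b"
proof -
  let ?W = "{welfare N v A | A. is_allocation N M A \<and> is_EF1 N v A}"
  have "finite ?W" and "welfare N v A \<in> ?W"
    using finite_welfares[OF assms(1,2)] assms(3,4) by blast+
  then show ?thesis
    unfolding het_ef1_opt_def using assms(5,6) Max_ge[of ?W] Max_in[of ?W] by fastforce
qed

lemma bval_red_val_None: "bval (red_val \<epsilon> None) X = real (card X)"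
  by (simp add: bval_def red_val_def)

lemma bval_red_val_Some:
  "finite X \<Longrightarrow> bval (red_val \<epsilon> (Some e)) X = \<epsilon> * real (card (X \<inter> e))"
  by (simp add: bval_def red_val_def sum.If_cases Int_def)

lemma welfare_red_agents:
  assumes "finite E"
  shows "welfare (red_agents E) v A =
           bval (v None) (A None) + (\<Sum>e\<in>E. bval (v (Some e)) (A (Some e)))"
  unfolding welfare_def red_agents_def
  using assms by (simp add: sum.reindex)

locale ef1_reduction = graph V E
  for V :: "'v set" and E :: "'v set set" +
  fixes \<epsilon> :: real
  assumes eps_pos: "\<epsilon> > 0"
begin

abbreviation "N \<equiv> red_agents E"
abbreviation "v \<equiv> red_val \<epsilon>"

lemma red_val_nonneg: "v i u \<ge> 0"
  using eps_pos by (simp add: red_val_def split: option.split)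

lemma bval_red_val_nonneg: "bval (v i) X \<ge> 0"
  unfolding bval_def by (simp add: red_val_nonneg sum_nonneg)

lemma bval_edge_agent_le: "e \<in> E \<Longrightarrow> finite X \<Longrightarrow> bval (v (Some e)) X \<le> 2 * \<epsilon>"
  using card_mono[OF finite_edge, of e "X \<inter> e"] card_edge eps_pos
  by (simp add: bval_red_val_Some)

lemma bval_edge_agent_le_single_good:
  assumes "e \<in> E" and "finite X" and "X \<noteq> {}" and "\<not> e \<subseteq> X"
  shows "\<exists>g\<in>X. bval (v (Some e)) X \<le> v (Some e) g"
proof (cases "X \<inter> e = {}")
  case True
  then show ?thesis
    using assms(2,3) red_val_nonneg by (force simp: bval_red_val_Some)
next
  case False
  then obtain g where g: "g \<in> X" "g \<in> e"
    by blast
  have "X \<inter> e \<subset> e"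
    using assms(4) by blast
  then have "card (X \<inter> e) < 2"
    using psubset_card_mono[OF finite_edge[OF assms(1)]] card_edge[OF assms(1)] by metis
  then have "bval (v (Some e)) X \<le> \<epsilon>"
    using assms(2) eps_pos by (simp add: bval_red_val_Some)
  then show ?thesis
    using g by (auto simp: red_val_def)
qed

lemma EF1_indep_set:
  assumes alloc: "is_allocation N V A" and ef1: "is_EF1 N v A"
  shows "indep_set V E (A None)"
  unfolding indep_set_def
proof (intro conjI ballI notI)
  show "A None \<subseteq> V"
    using alloc by (simp add: is_allocation_def red_agents_def)
next
  fix e assume e: "e \<in> E" and e_sub: "e \<subseteq> A None"
  have fin: "finite (A i)" for i
    using finite_allocation_bundle[OF finite_vertices alloc] .
  have "A None \<noteq> {}"
    using e_sub card_edge[OF e] by auto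
  then obtain g where g: "bval (v (Some e)) (A (Some e)) \<ge> bval (v (Some e)) (A None) - v (Some e) g"
    using ef1 e unfolding is_EF1_def red_agents_def by blast
  have "A (Some e) \<inter> A None = {}"
    using alloc e unfolding is_allocation_def red_agents_def by blast
  then have "A (Some e) \<inter> e = {}"
    using e_sub by blast
  then have "bval (v (Some e)) (A (Some e)) = 0"
    using fin by (simp add: bval_red_val_Some)
  moreover have "bval (v (Some e)) (A None) = 2 * \<epsilon>"
    using e_sub fin card_edge[OF e] by (simp add: bval_red_val_Some Int_absorb1)
  moreover have "v (Some e) g \<le> \<epsilon>"
    using eps_pos by (simp add: red_val_def)
  ultimately show False
    using g eps_pos by linarith
qed

lemma welfare_EF1_less:
  assumes "2 * \<epsilon> * real (card E) < 1"
    and "is_allocation N V A" and "is_EF1 N v A"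
  shows "welfare N v A < real (max_indep_size V E) + 1"
proof -
  have fin: "finite (A i)" for i
    using finite_allocation_bundle[OF finite_vertices assms(2)] .
  have "(\<Sum>e\<in>E. bval (v (Some e)) (A (Some e))) \<le> real (card E) * (2 * \<epsilon>)"
    using sum_bounded_above[of E "\<lambda>e. bval (v (Some e)) (A (Some e))"]
      bval_edge_agent_le fin by simp
  moreover have "card (A None) \<le> max_indep_size V E"
    using card_le_max_indep_size EF1_indep_set assms(2,3) by blast
  ultimately show ?thesis
    using assms(1) welfare_red_agents[OF finite_edges, of v A]
    by (simp add: bval_red_val_None algebra_simps)
qed

end

definition cover_edge :: "'v set set \<Rightarrow> 'v \<Rightarrow> 'v set" where
  "cover_edge E u = (SOME e. e \<in> E \<and> u \<in> e)"

definition cover_alloc :: "'v set \<Rightarrow> 'v set set \<Rightarrow> 'v set \<Rightarrow> 'v set option \<Rightarrow> 'v set" where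
  "cover_alloc V E S i =
     (case i of None \<Rightarrow> S | Some e \<Rightarrow> if e \<in> E then {u \<in> V - S. cover_edge E u = e} else {})"

context ef1_reduction
begin

context
  fixes S :: "'v set"
  assumes maximal: "maximal_indep_set V E S"
begin

abbreviation "A \<equiv> cover_alloc V E S"

lemma indep_set_S: "indep_set V E S"
  using maximal by (simp add: maximal_indep_set_def)

lemma cover_edge_mem: "u \<in> V - S \<Longrightarrow> cover_edge E u \<in> E \<and> u \<in> cover_edge E u"
  unfolding cover_edge_def using maximal_indep_set_cover[OF maximal] by (metis (mono_tags, lifting) someI_ex)

lemma cover_alloc_None: "A None = S"
  by (simp add: cover_alloc_def)

lemma cover_alloc_Some_subset: "A (Some e) \<subseteq> e"
  and cover_alloc_Some_disjoint: "A (Some e) \<inter> S = {}"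
  using cover_edge_mem by (auto simp: cover_alloc_def)

lemma finite_cover_alloc: "finite (A i)"
  using finite_vertices finite_subset indep_set_S
  by (auto simp: cover_alloc_def indep_set_def split: option.split)

lemma is_allocation_cover_alloc: "is_allocation N V A"
proof -
  have "V \<subseteq> (\<Union>i\<in>N. A i)"
  proof
    fix u assume u: "u \<in> V"
    show "u \<in> (\<Union>i\<in>N. A i)"
    proof (cases "u \<in> S")
      case True
      then show ?thesis
        by (auto simp: cover_alloc_def red_agents_def)
    next
      case False
      then have "Some (cover_edge E u) \<in> N" "u \<in> A (Some (cover_edge E u))"
        using cover_edge_mem u by (auto simp: cover_alloc_def red_agents_def)
      then show ?thesis
        by blast
    qed
  qed
  moreover have "A i = {}" if "i \<notin> N" for i
    using that by (cases i) (auto simp: cover_alloc_def red_agents_def)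
  ultimately show ?thesis
    using indep_set_S by (auto simp: is_allocation_def cover_alloc_def red_agents_def indep_set_def)
qed

lemma is_EF1_cover_alloc: "is_EF1 N v A"
  unfolding is_EF1_def
proof (intro ballI impI)
  fix i j assume i: "i \<in> N" and j: "j \<in> N" and nonempty: "A j \<noteq> {}"
  show "\<exists>g\<in>A j. bval (v i) (A j) - v i g \<le> bval (v i) (A i)"
  proof (cases "i = j")
    case True
    then show ?thesis
      using nonempty red_val_nonneg by fastforce
  next
    case False
    show ?thesis
    proof (cases i)
      case None
      then obtain f where f: "j = Some f"
        using False by (cases j) auto
      obtain g where g: "g \<in> A j"
        using nonempty by blast
      have "card (A j) \<le> 2"
        using f j cover_alloc_Some_subset card_mono[OF finite_edge] card_edge
        by (force simp: red_agents_def)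
      moreover have "S \<noteq> {}"
        using maximal_indep_set_nonempty[OF maximal] g f cover_alloc_Some_disjoint
          cover_alloc_Some_subset j edge_subset by (force simp: red_agents_def)
      then have "card S \<ge> 1"
        using finite_cover_alloc[of None] by (simp add: cover_alloc_None Suc_le_eq card_gt_0_iff)
      ultimately show ?thesis
        using g None by (auto simp: bval_red_val_None cover_alloc_None red_val_def)
    next
      case (Some e)
      have e: "e \<in> E"
        using i Some by (auto simp: red_agents_def)
      have "\<not> e \<subseteq> A j"
      proof
        assume e_sub: "e \<subseteq> A j"
        show False
        proof (cases j)
          case None
          then show False
            using e_sub e indep_set_S by (auto simp: cover_alloc_None indep_set_def)
        next
          case (Some f)
          then have "e \<subseteq> f"
            using e_sub cover_alloc_Some_subset by blast
          moreover have "f \<in> E"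
            using Some nonempty by (auto simp: cover_alloc_def split: if_splits)
          ultimately have "e = f"
            using card_subset_eq[OF finite_edge] card_edge e by metis
          then show False
            using False Some \<open>i = Some e\<close> by simp
        qed
      qed
      then obtain g where "g \<in> A j" "bval (v i) (A j) \<le> v i g"
        using bval_edge_agent_le_single_good[OF e finite_cover_alloc nonempty] Some by blast
      then show ?thesis
        using bval_red_val_nonneg[of i "A i"] by force
    qed
  qed
qed

lemma welfare_cover_alloc_ge: "real (card S) \<le> welfare N v A"
  using welfare_red_agents[OF finite_edges, of v A] sum_nonneg[OF bval_red_val_nonneg]
  by (simp add: cover_alloc_None bval_red_val_None)

end

lemma het_ef1_opt_red_bounds:
  assumes "2 * \<epsilon> * real (card E) < 1"
  shows "real (max_indep_size V E) \<le> het_ef1_opt N V v \<and>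
         het_ef1_opt N V v < real (max_indep_size V E) + 1"
proof -
  obtain S where S: "indep_set V E S" "card S = max_indep_size V E"
    using max_indep_size_attained by blast
  then have maximal: "maximal_indep_set V E S"
    by (rule maximal_indep_set_if_max_card)
  have "finite N"
    using finite_edges by (simp add: red_agents_def)
  with maximal show ?thesis
    using het_ef1_opt_bounds[OF _ finite_vertices is_allocation_cover_alloc is_EF1_cover_alloc
        welfare_cover_alloc_ge welfare_EF1_less[OF assms]] S(2)
    by metis
qed

end

theorem lemmaA3:
  fixes V :: "'v set" and E :: "'v set set" and \<epsilon> :: real and t :: nat
  assumes "finite V"
    and "\<forall>e\<in>E. e \<subseteq> V \<and> card e = 2"
    and "\<epsilon> > 0"
    and "2 * \<epsilon> * real (card E) < 1"
  shows "max_indep_size V E = t \<longleftrightarrow>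
           (real t \<le> het_ef1_opt (red_agents E) V (red_val \<epsilon>) \<and>
            het_ef1_opt (red_agents E) V (red_val \<epsilon>) < real t + 1)"
proof -
  interpret ef1_reduction V E \<epsilon>
    using assms(1-3) by unfold_locales
  show ?thesis
    using het_ef1_opt_red_bounds[OF assms(4)] by linarith
qed

end
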